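(* Let $\alpha>0$. The parallel algorithm ParPolyPA (described in the context) samples each host $h$ with probability $\deg(h)^\alpha/W$, i.e., for every index $i$, the host of the $i$-th sample equals node $h$ with probability $\deg_i(h)^\alpha/W_i$, where $\deg_i$ and $W_i$ refer to the graph on which sample $i$ is to be drawn (the graph containing all earlier samples).
   Context: Polynomial preferential attachment: start from a seed graph $G_0$ with $n_0$ nodes; new nodes arrive one at a time, each attached to one earlier node (host) chosen with probability proportional to $\deg(h)^\alpha$. For a sample index $i$, let $\deg_i(v)$, $W_i=\sum_v\deg_i(v)^\alpha$, $n_i$ and $\Delta_i$ (maximum degree) refer to the graph on which the $i$-th host is to be drawn. Proposal lists: the algorithm stores a list $P$ of nodes with multiplicities $c(v)$, and $w(v)=\deg(v)^\alpha/c(v)$, maintained as follows: initially each seed node $v$ appears $\lceil\deg_0(v)^\alpha n_0/W_0\rceil$ times; a host is drawn from a distribution by choosing a uniform random position of (the relevant part of) $P$ and accepting via rejection sampling; after adding a new node it is appended once and its host $h$ is appended while $w(h)$ exceeds the current value $W/n$. ParPolyPA processes the samples in batches. Let $s$ be the index of the first sample of a batch, and define $W_i'=W_s+2(i-s)$ if $\alpha\le 1$ and $W_i'=W_s+2\big((\Delta_s+i-s)^\alpha-\Delta_s^\alpha\big)$ if $\alpha>1$. Phase 1: indices $i=s,s+1,\dots$ are processed by the processors; for index $i$ a coin with heads probability $W_s/W_i'$ is flipped; on heads, the host of sample $i$ is drawn from $P_1(h)=\deg_s(h)^\alpha/W_s$ (rejection sampling from the proposal list as it was at the start of the batch); on tails,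 a shared variable $l$ is set to $\min\{l,i\}$ (initially $l=N+1$) and processing of indices $\ge l$ stops. Phase 2: all samples with index $<l$ are added to the graph and the proposal list is updated. Phase 3: for sample $l$ (if any), with probability $(W_l-W_s)/(W_l'-W_s)$ the host is drawn from $P_2(h)=(\deg_l(h)^\alpha-\deg_s(h)^\alpha)/(W_l-W_s)$, and otherwise from $P_3(h)=\deg_l(h)^\alpha/W_l$; the node and edge are added and the proposal list updated. Then the next batch starts with $s\gets l$. *)

theory Defs
  imports "HOL-Probability.Probability_Mass_Function"
begin

text \<open>The seed graph G0 is a simple graph with edge relation E
  on the nodes 0..<n0. Sample number j (1-based) creates the new node n0 + j - 1 and attaches it
  to a host. A run is recorded as the list hs of hosts chosen so far; the graph on which the
  next sample (index length hs + 1) is drawn is G0 plus these length hs nodes and edges.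
  Only degrees matter for the host distributions.\<close>

definition seed_deg :: "(nat \<times> nat) set \<Rightarrow> nat \<Rightarrow> nat" where
  "seed_deg E v = card {u. (v, u) \<in> E}"

definition pa_deg :: "(nat \<times> nat) set \<Rightarrow> nat \<Rightarrow> nat list \<Rightarrow> nat \<Rightarrow> nat" where
  "pa_deg E n0 hs v =
     seed_deg E v + count_list hs v + (if n0 \<le> v \<and> v < n0 + length hs then 1 else 0)"

definition pa_W :: "real \<Rightarrow> (nat \<times> nat) set \<Rightarrow> nat \<Rightarrow> nat list \<Rightarrow> real" where
  "pa_W \<alpha> E n0 hs = (\<Sum>v<n0 + length hs. real (pa_deg E n0 hs v) powr \<alpha>)"

definition pa_Delta :: "(nat \<times> nat) set \<Rightarrow> nat \<Rightarrow> nat list \<Rightarrow> nat" where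
  "pa_Delta E n0 hs = Max (pa_deg E n0 hs ` {..<n0 + length hs})"

definition weighted_pmf :: "(nat \<Rightarrow> real) \<Rightarrow> nat set \<Rightarrow> nat pmf" where
  "weighted_pmf f A = embed_pmf (\<lambda>v. if v \<in> A then f v / (\<Sum>u\<in>A. f u) else 0)"

primrec seq_pmf :: "'a pmf list \<Rightarrow> 'a list pmf" where
  "seq_pmf [] = return_pmf []"
| "seq_pmf (p # ps) = bind_pmf p (\<lambda>x. bind_pmf (seq_pmf ps) (\<lambda>xs. return_pmf (x # xs)))"

definition pa_Wprime :: "real \<Rightarrow> (nat \<times> nat) set \<Rightarrow> nat \<Rightarrow> nat list \<Rightarrow> nat \<Rightarrow> real" where
  "pa_Wprime \<alpha> E n0 hs i =
     (let s = Suc (length hs); Ws = pa_W \<alpha> E n0 hs; \<Delta> = real (pa_Delta E n0 hs) in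
      if \<alpha> \<le> 1 then Ws + 2 * real (i - s)
      else Ws + 2 * ((\<Delta> + real (i - s)) powr \<alpha> - \<Delta> powr \<alpha>))"

text \<open>Phase 1 (parallel): for every index i in s..N a coin with heads
  probability W_s / W'_i and an independent draw from P1 (the exact target of the rejection
  sampler from the proposal list at the start of the batch); l is the first index with tails
  (N+1 if none); the draws of indices < l are kept (Phase 2). Phase 3 draws sample l.\<close>
definition par_batch :: "real \<Rightarrow> (nat \<times> nat) set \<Rightarrow> nat \<Rightarrow> nat \<Rightarrow> nat list \<Rightarrow> nat list pmf" where
  "par_batch \<alpha> E n0 N hs =
    (let s = Suc (length hs);
         Ws = pa_W \<alpha> E n0 hs;
         P1 = weighted_pmf (\<lambda>v. real (pa_deg E n0 hs v) powr \<alpha>) {..<n0 + length hs}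
     in bind_pmf (seq_pmf (map (\<lambda>i. bernoulli_pmf (Ws / pa_Wprime \<alpha> E n0 hs i)) [s..<Suc N]))
        (\<lambda>coins. bind_pmf (seq_pmf (map (\<lambda>i. P1) [s..<Suc N]))
        (\<lambda>draws.
          (let m = length (takeWhile id coins);
               l = s + m;
               hs1 = hs @ take m draws
           in if l \<le> N then
                bind_pmf (bernoulli_pmf ((pa_W \<alpha> E n0 hs1 - Ws) / (pa_Wprime \<alpha> E n0 hs l - Ws)))
                 (\<lambda>c. bind_pmf
                   (if c then weighted_pmf
                        (\<lambda>v. real (pa_deg E n0 hs1 v) powr \<alpha> - real (pa_deg E n0 hs v) powr \<alpha>)
                        {..<n0 + length hs1}
                    else weighted_pmf (\<lambda>v. real (pa_deg E n0 hs1 v) powr \<alpha>) {..<n0 + length hs1})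
                   (\<lambda>h. return_pmf (hs1 @ [h])))
              else return_pmf hs1))))"

text \<open>Iterate batches (each batch adds at least one sample, so N rounds of fuel suffice).\<close>
primrec par_run :: "real \<Rightarrow> (nat \<times> nat) set \<Rightarrow> nat \<Rightarrow> nat \<Rightarrow> nat \<Rightarrow> nat list \<Rightarrow> nat list pmf" where
  "par_run \<alpha> E n0 N 0 hs = return_pmf hs"
| "par_run \<alpha> E n0 N (Suc k) hs =
     (if N \<le> length hs then return_pmf hs
      else bind_pmf (par_batch \<alpha> E n0 N hs) (par_run \<alpha> E n0 N k))"

definition ParPolyPA :: "real \<Rightarrow> (nat \<times> nat) set \<Rightarrow> nat \<Rightarrow> nat \<Rightarrow> nat list pmf" where
  "ParPolyPA \<alpha> E n0 N = par_run \<alpha> E n0 N N []"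

end

theory Submission
  imports Defs
begin

text \<open>In a batch started on the graph of the hosts \<open>hs\<close>, Phase 1 accepts a draw from the stale
  distribution \<open>deg_s(h)^\<alpha> / W_s\<close> with probability \<open>W_s / W'_i\<close>. Since \<open>W_s \<le> W_i \<le> W'_i\<close>, the
  remaining mass splits as \<open>(W_i - W_s) / W'_i\<close> for the correction \<open>P_2\<close> and \<open>(W'_i - W_i) / W'_i\<close>
  for \<open>P_3\<close>, and these three pieces add up to exactly \<open>deg_i(h)^\<alpha> / W_i\<close>. Hence a batch followed by
  anything that behaves like sequential preferential attachment is itself sequential preferential
  attachment; by induction over the remaining samples and over the batches, ParPolyPA has the
  output distribution of the sequential process, in which the claim holds by construction.\<close>

section \<open>Degrees and weights\<close>

definition valid_hosts :: "nat \<Rightarrow> nat list \<Rightarrow> bool" where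
  "valid_hosts n0 ys \<longleftrightarrow> (\<forall>j<length ys. ys ! j < n0 + j)"

lemma valid_hosts_Nil [simp]: "valid_hosts n0 []"
  by (simp add: valid_hosts_def)

lemma valid_hosts_snoc: "valid_hosts n0 (ys @ [x]) \<longleftrightarrow> valid_hosts n0 ys \<and> x < n0 + length ys"
  unfolding valid_hosts_def by (auto simp: nth_append less_Suc_eq)

lemma valid_hosts_appendD: "valid_hosts n0 (ys @ zs) \<Longrightarrow> valid_hosts n0 ys"
  unfolding valid_hosts_def by (metis length_append nth_append trans_less_add1)

lemma valid_hosts_not_in_set: "valid_hosts n0 ys \<Longrightarrow> n0 + length ys \<le> v \<Longrightarrow> v \<notin> set ys"
  unfolding valid_hosts_def by (auto simp: in_set_conv_nth)

lemma seed_deg_eq_0: "E \<subseteq> {..<n0} \<times> {..<n0} \<Longrightarrow> n0 \<le> v \<Longrightarrow> seed_deg E v = 0"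
  unfolding seed_deg_def by (metis (no_types, lifting) Collect_empty_eq card.empty
      SigmaD1 lessThan_iff not_le subsetD)

lemma seed_deg_pos:
  assumes "E \<subseteq> {..<n0} \<times> {..<n0}" "(a, b) \<in> E"
  shows "0 < seed_deg E a"
proof -
  have "finite {u. (a, u) \<in> E}"
    by (rule finite_subset[of _ "{..<n0}"]) (use assms(1) in auto)
  then show ?thesis
    unfolding seed_deg_def using assms(2) by (auto simp: card_gt_0_iff)
qed

lemma pa_deg_eq_0:
  assumes "E \<subseteq> {..<n0} \<times> {..<n0}" "valid_hosts n0 ys" "n0 + length ys \<le> v"
  shows "pa_deg E n0 ys v = 0"
  using assms seed_deg_eq_0[OF assms(1)] valid_hosts_not_in_set[OF assms(2,3)]
  unfolding pa_deg_def by (simp add: count_list_0_iff)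

lemma pa_deg_snoc_old:
  "v < n0 + length ys \<Longrightarrow> pa_deg E n0 (ys @ [x]) v = pa_deg E n0 ys v + (if v = x then 1 else 0)"
  unfolding pa_deg_def by auto

lemma pa_deg_snoc_new:
  assumes "E \<subseteq> {..<n0} \<times> {..<n0}" "valid_hosts n0 ys" "x < n0 + length ys"
  shows "pa_deg E n0 (ys @ [x]) (n0 + length ys) = 1"
  using assms seed_deg_eq_0[OF assms(1)] valid_hosts_not_in_set[OF assms(2)]
  unfolding pa_deg_def by (auto simp: count_list_0_iff)

lemma pa_deg_append_mono: "pa_deg E n0 ys v \<le> pa_deg E n0 (ys @ zs) v"
  unfolding pa_deg_def by auto

lemma pa_Delta_pos:
  assumes "E \<subseteq> {..<n0} \<times> {..<n0}" "E \<noteq> {}"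
  shows "0 < pa_Delta E n0 ys"
proof -
  obtain a b where ab: "(a, b) \<in> E" using assms(2) by auto
  then have "a < n0 + length ys" using assms(1) by auto
  then have "pa_deg E n0 ys a \<le> pa_Delta E n0 ys"
    unfolding pa_Delta_def by (intro Max_ge) auto
  moreover have "0 < pa_deg E n0 ys a"
    using seed_deg_pos[OF assms(1) ab] unfolding pa_deg_def by simp
  ultimately show ?thesis by linarith
qed

lemma pa_deg_append_le_Delta:
  assumes "E \<subseteq> {..<n0} \<times> {..<n0}" "E \<noteq> {}" "valid_hosts n0 hs"
  shows "pa_deg E n0 (hs @ zs) v \<le> pa_Delta E n0 hs + length zs"
proof (cases "v < n0 + length hs")
  case True
  then have "pa_deg E n0 hs v \<le> pa_Delta E n0 hs"
    unfolding pa_Delta_def by (intro Max_ge) auto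
  moreover have "pa_deg E n0 (hs @ zs) v = pa_deg E n0 hs v + count_list zs v"
    using True unfolding pa_deg_def by auto
  ultimately show ?thesis using count_le_length[of zs v] by linarith
next
  case False
  then have "pa_deg E n0 hs v = 0" using pa_deg_eq_0[OF assms(1,3)] by simp
  then have "pa_deg E n0 (hs @ zs) v \<le> count_list zs v + 1"
    unfolding pa_deg_def by (auto split: if_splits)
  then show ?thesis using count_le_length[of zs v] pa_Delta_pos[OF assms(1,2), of hs] by linarith
qed

lemma pa_W_pos:
  assumes "E \<subseteq> {..<n0} \<times> {..<n0}" "E \<noteq> {}"
  shows "0 < pa_W \<alpha> E n0 ys"
proof -
  obtain a b where ab: "(a, b) \<in> E" using assms(2) by auto
  then have "a < n0 + length ys" using assms(1) by auto
  moreover have "0 < real (pa_deg E n0 ys a) powr \<alpha>"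
    using seed_deg_pos[OF assms(1) ab] unfolding pa_deg_def by simp
  ultimately show ?thesis
    unfolding pa_W_def by (intro sum_pos2) auto
qed

lemma pa_W_snoc:
  assumes "E \<subseteq> {..<n0} \<times> {..<n0}" "valid_hosts n0 ys" "x < n0 + length ys"
  shows "pa_W \<alpha> E n0 (ys @ [x]) = pa_W \<alpha> E n0 ys + 1
     + (real (pa_deg E n0 ys x + 1) powr \<alpha> - real (pa_deg E n0 ys x) powr \<alpha>)"
proof -
  let ?L = "n0 + length ys"
  let ?c = "real (pa_deg E n0 ys x + 1) powr \<alpha> - real (pa_deg E n0 ys x) powr \<alpha>"
  have "pa_W \<alpha> E n0 (ys @ [x]) = (\<Sum>v<?L. real (pa_deg E n0 (ys @ [x]) v) powr \<alpha>) + 1"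
    using pa_deg_snoc_new[OF assms] by (simp add: pa_W_def)
  also have "(\<Sum>v<?L. real (pa_deg E n0 (ys @ [x]) v) powr \<alpha>)
      = (\<Sum>v<?L. real (pa_deg E n0 ys v) powr \<alpha> + (if v = x then ?c else 0))"
    by (intro sum.cong refl) (auto simp: pa_deg_snoc_old add.commute)
  also have "\<dots> = pa_W \<alpha> E n0 ys + ?c"
    using assms(3) by (simp add: sum.distrib pa_W_def)
  finally show ?thesis by simp
qed

lemma powr_plus_one_diff_MVT:
  assumes "(x::real) > 0"
  obtains z where "x < z" "z < x + 1" "(x + 1) powr a - x powr a = a * z powr (a - 1)"
proof -
  have "\<exists>z. x < z \<and> z < x + 1 \<and> (x + 1) powr a - x powr a = (x + 1 - x) * (a * z powr (a - 1))"
    by (rule MVT2) (use assms in \<open>auto intro!: has_real_derivative_powr\<close>)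
  then show ?thesis using that by auto
qed

lemma powr_Suc_diff_le_one:
  assumes "0 < \<alpha>" "\<alpha> \<le> 1"
  shows "real (d + 1) powr \<alpha> - real d powr \<alpha> \<le> 1"
proof (cases "d = 0")
  case False
  then obtain z where z: "real d < z" "(real d + 1) powr \<alpha> - real d powr \<alpha> = \<alpha> * z powr (\<alpha> - 1)"
    using powr_plus_one_diff_MVT[of "real d" \<alpha>] by auto
  have "z powr (\<alpha> - 1) \<le> z powr 0"
    using z(1) False assms(2) by (intro powr_mono) auto
  then have "z powr (\<alpha> - 1) \<le> 1"
    using z(1) False by simp
  then have "\<alpha> * z powr (\<alpha> - 1) \<le> 1"
    using assms by (metis mult_le_one powr_ge_zero)
  then show ?thesis using z(2) by (simp add: add.commute)
qed simp

lemma powr_Suc_diff_ge_one: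
  assumes "1 \<le> \<alpha>"
  shows "1 \<le> real (d + 1) powr \<alpha> - real d powr \<alpha>"
proof (cases "d = 0")
  case False
  then obtain z where z: "real d < z" "(real d + 1) powr \<alpha> - real d powr \<alpha> = \<alpha> * z powr (\<alpha> - 1)"
    using powr_plus_one_diff_MVT[of "real d" \<alpha>] by auto
  have "1 \<le> z powr (\<alpha> - 1)"
    using z(1) False assms by (intro ge_one_powr_ge_zero) auto
  then have "1 \<le> \<alpha> * z powr (\<alpha> - 1)"
    using assms by (metis mult_mono' mult_1 zero_le_one)
  then show ?thesis using z(2) by (simp add: add.commute)
qed (use assms in simp)

lemma powr_Suc_diff_mono:
  assumes "1 \<le> \<alpha>" "d \<le> b"
  shows "real (d + 1) powr \<alpha> - real d powr \<alpha> \<le> real (b + 1) powr \<alpha> - real b powr \<alpha>"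
proof (cases "d = 0 \<or> d = b")
  case True
  then show ?thesis using powr_Suc_diff_ge_one[OF assms(1), of b] by auto
next
  case False
  then obtain z where z: "z < real d + 1" "(real d + 1) powr \<alpha> - real d powr \<alpha> = \<alpha> * z powr (\<alpha> - 1)"
      "real d < z"
    using powr_plus_one_diff_MVT[of "real d" \<alpha>] by auto
  obtain y where y: "real b < y" "(real b + 1) powr \<alpha> - real b powr \<alpha> = \<alpha> * y powr (\<alpha> - 1)"
    using powr_plus_one_diff_MVT[of "real b" \<alpha>] False assms(2) by auto
  have "z \<le> y" using z(1) y(1) False assms(2) by linarith
  then have "z powr (\<alpha> - 1) \<le> y powr (\<alpha> - 1)"
    using assms(1) z(3) by (intro powr_mono2) auto
  then show ?thesis using z(2) y(2) assms(1) by (simp add: add.commute)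
qed

lemma pa_W_append_ge:
  assumes "E \<subseteq> {..<n0} \<times> {..<n0}" "0 < \<alpha>" "valid_hosts n0 (hs @ zs)"
  shows "pa_W \<alpha> E n0 hs + real (length zs) \<le> pa_W \<alpha> E n0 (hs @ zs)"
  using assms(3)
proof (induction zs rule: rev_induct)
  case (snoc x zs)
  then have valid: "valid_hosts n0 (hs @ zs)" "x < n0 + length (hs @ zs)"
    using valid_hosts_snoc[of n0 "hs @ zs" x] by auto
  define d where "d = pa_deg E n0 (hs @ zs) x"
  have "pa_W \<alpha> E n0 (hs @ zs @ [x])
      = pa_W \<alpha> E n0 (hs @ zs) + 1 + (real (d + 1) powr \<alpha> - real d powr \<alpha>)"
    using pa_W_snoc[OF assms(1) valid, of \<alpha>] by (simp add: d_def)
  moreover have "real d powr \<alpha> \<le> real (d + 1) powr \<alpha>"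
    using assms(2) by (intro powr_mono2) auto
  ultimately show ?case
    using snoc.IH[OF valid(1)] by simp
qed simp

text \<open>Each new sample adds 1 for the new leaf and the increment of \<open>d^\<alpha>\<close> at the host. The
  increment is at most 1 if \<open>\<alpha> \<le> 1\<close>; otherwise it is at most the increment at \<open>\<Delta>_s + k\<close>, which
  bounds the host degree after \<open>k\<close> samples and is itself at least 1.\<close>

lemma pa_W_append_le_Wprime:
  assumes "E \<subseteq> {..<n0} \<times> {..<n0}" "E \<noteq> {}" "0 < \<alpha>" "valid_hosts n0 (hs @ zs)"
  shows "pa_W \<alpha> E n0 (hs @ zs) \<le> pa_Wprime \<alpha> E n0 hs (Suc (length (hs @ zs)))"
proof -
  let ?D = "pa_Delta E n0 hs"
  let ?B = "\<lambda>k. if \<alpha> \<le> 1 then 2 * real k else 2 * ((real ?D + real k) powr \<alpha> - real ?D powr \<alpha>)"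
  have "pa_W \<alpha> E n0 (hs @ zs) \<le> pa_W \<alpha> E n0 hs + ?B (length zs)"
    using assms(4)
  proof (induction zs rule: rev_induct)
    case (snoc x zs)
    let ?k = "length zs"
    have valid: "valid_hosts n0 (hs @ zs)" "x < n0 + length (hs @ zs)"
      using snoc.prems valid_hosts_snoc[of n0 "hs @ zs" x] by auto
    define d where "d = pa_deg E n0 (hs @ zs) x"
    have "d \<le> ?D + ?k"
      unfolding d_def using pa_deg_append_le_Delta[OF assms(1,2)] valid(1) valid_hosts_appendD by blast
    then have "1 + (real (d + 1) powr \<alpha> - real d powr \<alpha>) \<le> ?B (length (zs @ [x])) - ?B ?k"
      using powr_Suc_diff_le_one[OF assms(3), of d]
        powr_Suc_diff_mono[of \<alpha> d "?D + ?k"] powr_Suc_diff_ge_one[of \<alpha> "?D + ?k"]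
      by (auto simp: algebra_simps)
    moreover have "pa_W \<alpha> E n0 (hs @ zs @ [x])
        = pa_W \<alpha> E n0 (hs @ zs) + 1 + (real (d + 1) powr \<alpha> - real d powr \<alpha>)"
      using pa_W_snoc[OF assms(1) valid, of \<alpha>] by (simp add: d_def)
    ultimately show ?case
      using snoc.IH[OF valid(1)] by linarith
  qed simp
  then show ?thesis
    unfolding pa_Wprime_def Let_def by (cases "\<alpha> \<le> 1") (simp_all add: right_diff_distrib)
qed

lemma pa_Wprime_batch_start: "pa_Wprime \<alpha> E n0 hs (Suc (length hs)) = pa_W \<alpha> E n0 hs"
  unfolding pa_Wprime_def Let_def by simp

section \<open>Weighted distributions and mixtures\<close>

lemma pmf_weighted_pmf:
  assumes "finite A" "\<And>v. v \<in> A \<Longrightarrow> 0 \<le> f v" "0 < sum f A"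
  shows "pmf (weighted_pmf f A) v = (if v \<in> A then f v / sum f A else 0)"
  unfolding weighted_pmf_def
proof (rule pmf_embed_pmf)
  show "0 \<le> (if x \<in> A then f x / sum f A else 0)" for x
    using assms by auto
  have "(\<integral>\<^sup>+x. ennreal (if x \<in> A then f x / sum f A else 0) \<partial>count_space UNIV)
       = (\<Sum>x\<in>A. ennreal (f x / sum f A))"
    by (subst nn_integral_count_space') (use assms in auto)
  also have "\<dots> = ennreal (\<Sum>x\<in>A. f x / sum f A)"
    using assms by (subst sum_ennreal) auto
  also have "(\<Sum>x\<in>A. f x / sum f A) = 1"
    using assms by (simp add: sum_divide_distrib[symmetric])
  finally show "(\<integral>\<^sup>+x. ennreal (if x \<in> A then f x / sum f A else 0) \<partial>count_space UNIV) = 1"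
    by simp
qed

lemma mixture_weights_eq:
  fixes Ws Wc W' a b :: real
  assumes "0 < Ws" "Ws < Wc" "Wc \<le> W'"
  defines "q \<equiv> Ws / W'" and "p \<equiv> (Wc - Ws) / (W' - Ws)"
  shows "q * (a / Ws) + (1 - q) * (p * ((b - a) / (Wc - Ws)) + (1 - p) * (b / Wc)) = b / Wc"
proof -
  have "q * (a / Ws) = a / W'" "(1 - q) * p = (Wc - Ws) / W'" "(1 - q) * (1 - p) = (W' - Wc) / W'"
    using assms by (simp_all add: field_simps)
  then have "q * (a / Ws) + (1 - q) * (p * ((b - a) / (Wc - Ws)) + (1 - p) * (b / Wc))
      = a / W' + (Wc - Ws) / W' * ((b - a) / (Wc - Ws)) + (W' - Wc) / W' * (b / Wc)"
    by (simp only: distrib_left mult.assoc[symmetric] add.assoc)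
  also have "\<dots> = b / Wc"
    using assms by (simp add: field_simps)
  finally show ?thesis .
qed

lemma emeasure_pmf_const:
  assumes "\<And>x. x \<in> set_pmf M \<Longrightarrow> x \<in> A \<longleftrightarrow> P"
  shows "emeasure (measure_pmf M) A = of_bool P"
proof -
  have "emeasure (measure_pmf M) A = emeasure (measure_pmf M) (A \<inter> set_pmf M)"
    by (simp add: emeasure_Int_set_pmf)
  also have "A \<inter> set_pmf M = (if P then set_pmf M else {})"
    using assms by auto
  finally show ?thesis by (simp add: emeasure_pmf)
qed

lemma bernoulli_pmf_0: "bernoulli_pmf 0 = return_pmf False"
  by (rule pmf_eqI) (simp add: pmf_return split: split_indicator)

lemma set_pmf_seq_pmf_length: "xs \<in> set_pmf (seq_pmf ps) \<Longrightarrow> length xs = length ps"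
  by (induction ps arbitrary: xs) auto

section \<open>Sequential and batched preferential attachment\<close>

locale poly_pa =
  fixes \<alpha> :: real and E :: "(nat \<times> nat) set" and n0 :: nat
  assumes seed_nodes: "E \<subseteq> {..<n0} \<times> {..<n0}"
    and seed_nonempty: "E \<noteq> {}"
    and alpha_pos: "0 < \<alpha>"
begin

abbreviation deg :: "nat list \<Rightarrow> nat \<Rightarrow> nat" where
  "deg \<equiv> pa_deg E n0"

abbreviation W :: "nat list \<Rightarrow> real" where
  "W \<equiv> pa_W \<alpha> E n0"

abbreviation Wprime :: "nat list \<Rightarrow> nat \<Rightarrow> real" where
  "Wprime \<equiv> pa_Wprime \<alpha> E n0"

definition host_pmf :: "nat list \<Rightarrow> nat pmf" where
  "host_pmf ys = weighted_pmf (\<lambda>v. real (deg ys v) powr \<alpha>) {..<n0 + length ys}"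

lemma pmf_host_pmf_if:
  "pmf (host_pmf ys) v = (if v < n0 + length ys then real (deg ys v) powr \<alpha> / W ys else 0)"
  unfolding host_pmf_def using pa_W_pos[OF seed_nodes seed_nonempty, of \<alpha> ys]
  by (subst pmf_weighted_pmf) (auto simp: pa_W_def)

lemma pmf_host_pmf: "valid_hosts n0 ys \<Longrightarrow> pmf (host_pmf ys) v = real (deg ys v) powr \<alpha> / W ys"
  using pmf_host_pmf_if pa_deg_eq_0[OF seed_nodes, of ys v] by auto

lemma set_pmf_host_pmf: "h \<in> set_pmf (host_pmf ys) \<Longrightarrow> h < n0 + length ys"
  using pmf_host_pmf_if[of ys h] by (auto simp: set_pmf_iff split: if_splits)

text \<open>Phase 3 for the sample following \<open>cur\<close> in a batch that started after the hosts \<open>hs\<close>: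
  the weighted branch is the paper's \<open>P_2\<close>, and \<open>host_pmf cur\<close> is \<open>P_3\<close>.\<close>

definition phase3_host :: "nat list \<Rightarrow> nat list \<Rightarrow> nat pmf" where
  "phase3_host hs cur =
     bernoulli_pmf ((W cur - W hs) / (Wprime hs (Suc (length cur)) - W hs)) \<bind>
       (\<lambda>c. if c then weighted_pmf (\<lambda>v. real (deg cur v) powr \<alpha> - real (deg hs v) powr \<alpha>)
                        {..<n0 + length cur}
            else host_pmf cur)"

lemma host_pmf_mixture:
  assumes valid: "valid_hosts n0 (hs @ zs)"
  shows "bernoulli_pmf (W hs / Wprime hs (Suc (length (hs @ zs)))) \<bind>
           (\<lambda>c. if c then host_pmf hs else phase3_host hs (hs @ zs))
         = host_pmf (hs @ zs)"
proof (rule pmf_eqI)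
  fix h
  let ?cur = "hs @ zs"
  let ?P2 = "weighted_pmf (\<lambda>v. real (deg ?cur v) powr \<alpha> - real (deg hs v) powr \<alpha>) {..<n0 + length ?cur}"
  define Ws where "Ws = W hs"
  define Wc where "Wc = W ?cur"
  define W' where "W' = Wprime hs (Suc (length ?cur))"
  define q where "q = Ws / W'"
  define p where "p = (Wc - Ws) / (W' - Ws)"
  have valid_hs: "valid_hosts n0 hs" using valid valid_hosts_appendD by blast
  have Ws_pos: "0 < Ws" unfolding Ws_def by (rule pa_W_pos[OF seed_nodes seed_nonempty])
  have Wc_ge: "Ws + real (length zs) \<le> Wc"
    unfolding Ws_def Wc_def by (rule pa_W_append_ge[OF seed_nodes alpha_pos valid])
  have Wc_le: "Wc \<le> W'"
    unfolding W'_def Wc_def by (rule pa_W_append_le_Wprime[OF seed_nodes seed_nonempty alpha_pos valid])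
  have "0 \<le> q" "q \<le> 1" "0 \<le> p" "p \<le> 1"
    using Ws_pos Wc_ge Wc_le unfolding q_def p_def by (auto simp: divide_simps)
  then have "pmf (bernoulli_pmf q \<bind> (\<lambda>c. if c then host_pmf hs else phase3_host hs ?cur)) h
      = q * pmf (host_pmf hs) h + (1 - q) * (p * pmf ?P2 h + (1 - p) * pmf (host_pmf ?cur) h)"
    unfolding phase3_host_def p_def Ws_def Wc_def W'_def by (simp add: pmf_bind algebra_simps)
  also have "\<dots> = pmf (host_pmf ?cur) h"
  proof (cases "zs = []")
    case True
    then show ?thesis
      using Ws_pos unfolding q_def Ws_def W'_def by (simp add: pa_Wprime_batch_start)
  next
    case False
    then have "0 < real (length zs)" by simp
    then have Ws_less: "Ws < Wc" using Wc_ge by linarith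
    have deg_mono: "real (deg hs v) powr \<alpha> \<le> real (deg ?cur v) powr \<alpha>" for v
      using alpha_pos by (intro powr_mono2) (auto simp: pa_deg_append_mono)
    have "(\<Sum>v<n0 + length ?cur. real (deg hs v) powr \<alpha>) = Ws"
      unfolding Ws_def pa_W_def
      by (rule sum.mono_neutral_right) (auto simp: pa_deg_eq_0[OF seed_nodes valid_hs])
    then have "(\<Sum>v<n0 + length ?cur. real (deg ?cur v) powr \<alpha> - real (deg hs v) powr \<alpha>) = Wc - Ws"
      by (simp add: sum_subtractf Wc_def pa_W_def)
    then have "pmf ?P2 h = (real (deg ?cur h) powr \<alpha> - real (deg hs h) powr \<alpha>) / (Wc - Ws)"
      using deg_mono Ws_less pa_deg_eq_0[OF seed_nodes valid, of h] pa_deg_eq_0[OF seed_nodes valid_hs, of h]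
      by (subst pmf_weighted_pmf) auto
    then show ?thesis
      using pmf_host_pmf[OF valid_hs] pmf_host_pmf[OF valid] mixture_weights_eq[OF Ws_pos Ws_less Wc_le]
      unfolding q_def p_def Ws_def Wc_def by simp
  qed
  finally show "pmf (bernoulli_pmf (W hs / W') \<bind> (\<lambda>c. if c then host_pmf hs else phase3_host hs ?cur)) h
      = pmf (host_pmf ?cur) h"
    unfolding q_def Ws_def .
qed

lemma set_pmf_phase3_host:
  assumes valid: "valid_hosts n0 (hs @ zs)" and h: "h \<in> set_pmf (phase3_host hs (hs @ zs))"
  shows "h < n0 + length (hs @ zs)"
proof (cases "zs = []")
  case True
  then have "phase3_host hs (hs @ zs) = host_pmf (hs @ zs)"
    unfolding phase3_host_def by (simp add: bernoulli_pmf_0 bind_return_pmf)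
  then show ?thesis using h set_pmf_host_pmf[of h "hs @ zs"] by simp
next
  case False
  have "0 < W hs" by (rule pa_W_pos[OF seed_nodes seed_nonempty])
  moreover have "0 < real (length zs)" using False by simp
  then have "W hs < Wprime hs (Suc (length (hs @ zs)))"
    using pa_W_append_ge[OF seed_nodes alpha_pos valid]
      pa_W_append_le_Wprime[OF seed_nodes seed_nonempty alpha_pos valid] by linarith
  ultimately have "set_pmf (bernoulli_pmf (W hs / Wprime hs (Suc (length (hs @ zs))))) = UNIV"
    by (intro set_pmf_bernoulli) auto
  then have "h \<in> set_pmf (host_pmf (hs @ zs))"
    using h by (subst host_pmf_mixture[OF valid, symmetric]) auto
  then show ?thesis by (rule set_pmf_host_pmf)
qed

primrec seq_pa :: "nat \<Rightarrow> nat list \<Rightarrow> nat list pmf" where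
  "seq_pa 0 ys = return_pmf ys"
| "seq_pa (Suc k) ys = host_pmf ys \<bind> (\<lambda>h. seq_pa k (ys @ [h]))"

lemma set_pmf_seq_pa: "xs \<in> set_pmf (seq_pa k ys) \<Longrightarrow> \<exists>zs. xs = ys @ zs"
  by (induction k arbitrary: ys) fastforce+

definition seq_pa_upto :: "nat \<Rightarrow> nat list \<Rightarrow> nat list pmf" where
  "seq_pa_upto N ys = seq_pa (N - length ys) ys"

lemma seq_pa_upto_done: "N \<le> length ys \<Longrightarrow> seq_pa_upto N ys = return_pmf ys"
  by (simp add: seq_pa_upto_def)

lemma seq_pa_upto_step:
  assumes "length ys < N"
  shows "seq_pa_upto N ys = host_pmf ys \<bind> (\<lambda>h. seq_pa_upto N (ys @ [h]))"
proof -
  obtain k where "N - length ys = Suc k" using assms by (metis Suc_diff_Suc)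
  moreover from this have "N - length (ys @ [h]) = k" for h by simp
  ultimately show ?thesis unfolding seq_pa_upto_def by simp
qed

text \<open>The rest of a batch after the prefix \<open>cur\<close> of a run started after \<open>hs\<close>, given the
  remaining Phase 1 coins and draws: the first tail stops Phase 1 and triggers Phase 3.\<close>

fun batch_rest :: "nat list \<Rightarrow> nat list \<Rightarrow> bool list \<Rightarrow> nat list \<Rightarrow> nat list pmf" where
  "batch_rest hs cur (c # cs) (d # ds) =
     (if c then batch_rest hs (cur @ [d]) cs ds else map_pmf (\<lambda>h. cur @ [h]) (phase3_host hs cur))"
| "batch_rest hs cur _ _ = return_pmf cur"

lemma batch_rest_eq:
  "length cs = length ds \<Longrightarrow> batch_rest hs cur cs ds =
    (let m = length (takeWhile id cs); cur' = cur @ take m ds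
     in if m < length cs then map_pmf (\<lambda>h. cur' @ [h]) (phase3_host hs cur') else return_pmf cur')"
proof (induction cs arbitrary: cur ds)
  case (Cons c cs)
  then obtain d ds' where "ds = d # ds'" by (cases ds) auto
  then show ?case using Cons.IH[of ds' "cur @ [d]"] Cons.prems by (auto simp: Let_def)
qed simp

definition phase1_coins :: "nat list \<Rightarrow> nat \<Rightarrow> nat \<Rightarrow> bool list pmf" where
  "phase1_coins hs N a = seq_pmf (map (\<lambda>i. bernoulli_pmf (W hs / Wprime hs i)) [a..<Suc N])"

definition phase1_draws :: "nat list \<Rightarrow> nat \<Rightarrow> nat \<Rightarrow> nat list pmf" where
  "phase1_draws hs N a = seq_pmf (map (\<lambda>i. host_pmf hs) [a..<Suc N])"

lemma phase1_coins_Cons: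
  "a \<le> N \<Longrightarrow> phase1_coins hs N a
     = bernoulli_pmf (W hs / Wprime hs a) \<bind> (\<lambda>c. map_pmf ((#) c) (phase1_coins hs N (Suc a)))"
  unfolding phase1_coins_def by (simp add: upt_conv_Cons map_pmf_def del: upt_Suc)

lemma phase1_draws_Cons:
  "a \<le> N \<Longrightarrow> phase1_draws hs N a = host_pmf hs \<bind> (\<lambda>d. map_pmf ((#) d) (phase1_draws hs N (Suc a)))"
  unfolding phase1_draws_def by (simp add: upt_conv_Cons map_pmf_def del: upt_Suc)

lemma par_batch_eq:
  "par_batch \<alpha> E n0 N hs = phase1_coins hs N (Suc (length hs)) \<bind>
     (\<lambda>cs. phase1_draws hs N (Suc (length hs)) \<bind> batch_rest hs hs cs)"
  unfolding par_batch_def phase1_coins_def phase1_draws_def Let_def host_pmf_def[symmetric]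
  using length_takeWhile_le
  by (intro bind_pmf_cong refl)
    (fastforce simp: batch_rest_eq Let_def phase3_host_def map_pmf_def bind_assoc_pmf host_pmf_def
      dest!: set_pmf_seq_pmf_length simp del: upt_Suc)

lemma seq_pa_upto_batch_step:
  assumes valid: "valid_hosts n0 (hs @ zs)" and "length (hs @ zs) < N"
  shows "bernoulli_pmf (W hs / Wprime hs (Suc (length (hs @ zs)))) \<bind>
           (\<lambda>c. if c then host_pmf hs \<bind> (\<lambda>d. seq_pa_upto N (hs @ zs @ [d]))
                else phase3_host hs (hs @ zs) \<bind> (\<lambda>d. seq_pa_upto N (hs @ zs @ [d])))
         = seq_pa_upto N (hs @ zs)"
proof -
  have "seq_pa_upto N (hs @ zs) = host_pmf (hs @ zs) \<bind> (\<lambda>d. seq_pa_upto N (hs @ zs @ [d]))"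
    using seq_pa_upto_step[OF assms(2)] by simp
  also note host_pmf_mixture[OF valid, symmetric]
  finally show ?thesis
    by (simp add: bind_assoc_pmf if_distrib[of "\<lambda>M. bind_pmf M _"] cong: if_cong)
qed

text \<open>A head appends a stale draw and continues the batch, a tail hands over to Phase 3; by
  \<open>host_pmf_mixture\<close> the two branches together make one step of the sequential process.\<close>

lemma batch_rest_then_seq_pa_upto:
  assumes "length hs < N"
    and continue: "\<And>ys. valid_hosts n0 ys \<Longrightarrow> length hs < length ys \<Longrightarrow> Psi ys = seq_pa_upto N ys"
    and "valid_hosts n0 (hs @ zs)" "length (hs @ zs) \<le> N"
  shows "phase1_coins hs N (Suc (length (hs @ zs))) \<bind> (\<lambda>cs. phase1_draws hs N (Suc (length (hs @ zs))) \<bind>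
      (\<lambda>ds. batch_rest hs (hs @ zs) cs ds \<bind> Psi))
    = seq_pa_upto N (hs @ zs)"
  using assms(3,4)
proof (induction "N - length (hs @ zs)" arbitrary: zs)
  case 0
  then have "length (hs @ zs) = N" by simp
  then show ?case
    using continue[OF "0.prems"(1)] \<open>length hs < N\<close>
    by (simp add: phase1_coins_def phase1_draws_def bind_return_pmf)
next
  case (Suc k)
  let ?cur = "hs @ zs"
  let ?a = "Suc (length ?cur)"
  have "length ?cur < N" using Suc.hyps(2) by simp
  have "phase1_coins hs N (Suc ?a) \<bind> (\<lambda>cs. host_pmf hs \<bind> (\<lambda>d. phase1_draws hs N (Suc ?a) \<bind>
           (\<lambda>ds. batch_rest hs ?cur (c # cs) (d # ds) \<bind> Psi)))
      = (if c then host_pmf hs \<bind> (\<lambda>d. seq_pa_upto N (hs @ zs @ [d]))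
         else phase3_host hs ?cur \<bind> (\<lambda>d. seq_pa_upto N (hs @ zs @ [d])))" for c
  proof (cases c)
    case True
    have "phase1_coins hs N (Suc ?a) \<bind> (\<lambda>cs. phase1_draws hs N (Suc ?a) \<bind>
             (\<lambda>ds. batch_rest hs (hs @ zs @ [d]) cs ds \<bind> Psi))
        = seq_pa_upto N (hs @ zs @ [d])" if "d \<in> set_pmf (host_pmf hs)" for d
    proof -
      have "valid_hosts n0 (hs @ zs @ [d])"
        using Suc.prems(1) set_pmf_host_pmf[OF that] valid_hosts_snoc[of n0 ?cur d] by simp
      then show ?thesis
        using Suc.hyps(1)[of "zs @ [d]"] Suc.hyps(2) Suc.prems by simp
    qed
    then show ?thesis
      using True by (subst bind_commute_pmf) (auto intro: bind_pmf_cong)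
  next
    case False
    have "phase3_host hs ?cur \<bind> (\<lambda>d. Psi (hs @ zs @ [d]))
        = phase3_host hs ?cur \<bind> (\<lambda>d. seq_pa_upto N (hs @ zs @ [d]))"
      using set_pmf_phase3_host[OF Suc.prems(1)] Suc.prems(1) \<open>length ?cur < N\<close>
      by (intro bind_pmf_cong refl continue) (auto simp: valid_hosts_snoc[of _ ?cur, simplified])
    then show ?thesis
      using False by (simp add: bind_pmf_const bind_map_pmf)
  qed
  then show ?case
    using seq_pa_upto_batch_step[OF Suc.prems(1) \<open>length ?cur < N\<close>] \<open>length ?cur < N\<close>
    by (simp add: phase1_coins_Cons phase1_draws_Cons bind_map_pmf bind_assoc_pmf)
qed

lemma par_run_eq_seq_pa_upto:
  "valid_hosts n0 hs \<Longrightarrow> N - length hs \<le> k \<Longrightarrow> par_run \<alpha> E n0 N k hs = seq_pa_upto N hs"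
proof (induction k arbitrary: hs)
  case 0
  then show ?case by (simp add: seq_pa_upto_done)
next
  case (Suc k)
  show ?case
  proof (cases "N \<le> length hs")
    case False
    have "par_run \<alpha> E n0 N k ys = seq_pa_upto N ys"
      if "valid_hosts n0 ys" "length hs < length ys" for ys
      using Suc.IH that Suc.prems by simp
    then show ?thesis
      using batch_rest_then_seq_pa_upto[of hs N "par_run \<alpha> E n0 N k" "[]"] Suc.prems False
      by (simp add: par_batch_eq bind_assoc_pmf)
  qed (simp add: seq_pa_upto_done)
qed

lemma ParPolyPA_eq_seq_pa: "ParPolyPA \<alpha> E n0 N = seq_pa N []"
  using par_run_eq_seq_pa_upto[of "[]" N N] by (simp add: ParPolyPA_def seq_pa_upto_def)

lemma emeasure_seq_pa_next_host:
  assumes "valid_hosts n0 ys" "length ys \<le> length hs" "length hs < length ys + k"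
  shows "emeasure (seq_pa k ys) {xs. take (length hs) xs = hs \<and> xs ! length hs = h}
       = emeasure (seq_pa k ys) {xs. take (length hs) xs = hs} * ennreal (real (deg hs h) powr \<alpha> / W hs)"
  using assms
proof (induction k arbitrary: ys)
  case (Suc k)
  let ?A = "{xs. take (length hs) xs = hs \<and> xs ! length hs = h}"
  let ?B = "{xs. take (length hs) xs = hs}"
  show ?case
  proof (cases "length hs = length ys")
    case True
    have A: "emeasure (seq_pa k (ys @ [x])) ?A = of_bool (hs = ys) * of_bool (x = h)"
      and B: "emeasure (seq_pa k (ys @ [x])) ?B = of_bool (hs = ys)" for x
      unfolding of_bool_conj[symmetric]
      by (intro emeasure_pmf_const; force dest: set_pmf_seq_pa simp: True)+
    have "(\<integral>\<^sup>+x. of_bool (x = h) \<partial>host_pmf ys) = (\<integral>\<^sup>+x. indicator {h} x \<partial>host_pmf ys)"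
      by (simp add: indicator_def)
    also have "\<dots> = ennreal (pmf (host_pmf ys) h)"
      by (simp add: emeasure_pmf_single)
    finally show ?thesis
      using pmf_host_pmf[OF Suc.prems(1)] by (simp add: A B nn_integral_cmult)
  next
    case False
    have "emeasure (seq_pa k (ys @ [x])) ?A
        = emeasure (seq_pa k (ys @ [x])) ?B * ennreal (real (deg hs h) powr \<alpha> / W hs)"
      if "x \<in> set_pmf (host_pmf ys)" for x
      using Suc.IH[of "ys @ [x]"] Suc.prems False set_pmf_host_pmf[OF that]
      by (simp add: valid_hosts_snoc)
    then show ?thesis
      by (simp add: nn_integral_multc[symmetric] cong: nn_integral_cong_AE[OF AE_pmfI])
  qed
qed simp

lemma prob_seq_pa_next_host:
  assumes "valid_hosts n0 ys" "length ys \<le> length hs" "length hs < length ys + k"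
  shows "measure_pmf.prob (seq_pa k ys) {xs. take (length hs) xs = hs \<and> xs ! length hs = h}
       = measure_pmf.prob (seq_pa k ys) {xs. take (length hs) xs = hs} * (real (deg hs h) powr \<alpha> / W hs)"
  using emeasure_seq_pa_next_host[OF assms] pa_W_pos[OF seed_nodes seed_nonempty, of \<alpha> hs]
  by (simp add: measure_pmf.emeasure_eq_measure ennreal_mult''[symmetric])

end

theorem theorem4:
  fixes \<alpha> :: real and E :: "(nat \<times> nat) set" and n0 N i :: nat
    and hs :: "nat list" and h :: nat
  assumes "\<alpha> > 0"
    and "E \<subseteq> {..<n0} \<times> {..<n0}" and "sym E" and "\<forall>v. (v, v) \<notin> E" and "E \<noteq> {}"
    and "1 \<le> i" and "i \<le> N" and "length hs = i - 1"
  shows "measure_pmf.prob (ParPolyPA \<alpha> E n0 N) {xs. take (i - 1) xs = hs \<and> xs ! (i - 1) = h}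
       = measure_pmf.prob (ParPolyPA \<alpha> E n0 N) {xs. take (i - 1) xs = hs}
         * (real (pa_deg E n0 hs h) powr \<alpha> / pa_W \<alpha> E n0 hs)"
proof -
  interpret poly_pa \<alpha> E n0
    using assms by unfold_locales auto
  show ?thesis
    using prob_seq_pa_next_host[of "[]" hs N h] assms(6-8)
    by (simp add: ParPolyPA_eq_seq_pa)
qed

end
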